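(* Let $(a_N)$ be a sequence of positive numbers and, for each $N$, let $P_{N,a_N}$ be the probability on sequences $(n_j)_{j\ge0}$ of nonnegative integers with $\sum_jn_j=N$ given by $P_{N,a_N}((n_j))\propto e^{-a_N\sum_jjn_j}$. Let $\lambda_N=1-m_N/N$ with integers $0\le m_N\le N$, and suppose $\lambda_N\to\lambda\le1$ and $(1-\lambda_N)Na_N\to\infty$. Then $$P_{N,a_N}\Big(\frac{n_0}N\ge\lambda_N\Big)=e^{-(1+\epsilon_N)A_{N1}(\lambda_N)},\qquad A_{N1}(\lambda_N)=\frac{e^{-Na_N}\big(e^{\lambda_NNa_N}-1\big)}{e^{a_N}-1},$$ where $0<\epsilon_N<-\ln\big(1-e^{-(1-\lambda_N)Na_N}\big)\to0$.
   Context: This is the canonical ensemble of $N$ noninteracting bosons in a one-dimensional harmonic trap, $n_0$ being the ground-state occupation. *)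

theory Defs
  imports "HOL-Analysis.Analysis"
begin

definition support :: "(nat \<Rightarrow> nat) \<Rightarrow> nat set" where
  "support n = {j. n j \<noteq> 0}"

definition configs :: "nat \<Rightarrow> (nat \<Rightarrow> nat) set" where
  "configs N = {n. finite (support n) \<and> (\<Sum>j\<in>support n. n j) = N}"

definition energy :: "(nat \<Rightarrow> nat) \<Rightarrow> nat" where
  "energy n = (\<Sum>j\<in>support n. j * n j)"

definition weight :: "real \<Rightarrow> (nat \<Rightarrow> nat) \<Rightarrow> real" where
  "weight a n = exp (- a * real (energy n))"

definition canon_prob :: "nat \<Rightarrow> real \<Rightarrow> ((nat \<Rightarrow> nat) \<Rightarrow> bool) \<Rightarrow> real" where
  "canon_prob N a E = infsum (weight a) {n \<in> configs N. E n} / infsum (weight a) (configs N)"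

definition A_N1 :: "nat \<Rightarrow> real \<Rightarrow> real \<Rightarrow> real" where
  "A_N1 N a l = exp (- real N * a) * (exp (l * real N * a) - 1) / (exp a - 1)"

end

theory Submission
  imports Defs "HOL-Real_Asymp.Real_Asymp"
begin

(* With q = exp (-a), a configuration of N + 1 particles either has a particle in the ground
   state, which can be removed without changing the energy, or arises from a configuration of
   N + 1 particles by lifting every particle one level, which costs energy N + 1. Hence
   Z (N + 1) = Z N + q^(N+1) Z (N + 1), i.e. Z N = prod_{k=1..N} 1 / (1 - q^k). Removing N - m
   ground-state particles identifies the event n_0 >= N - m with the configurations of m
   particles, so its probability is Z m / Z N = prod_{k=m+1..N} (1 - q^k). Termwise
   x < - ln (1 - x) < x (1 - ln (1 - q^m)) for x = q^k <= q^m, and sum_{k=m+1..N} q^k = A_N1;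
   since q^m = exp (- (1 - lambda_N) N a_N) tends to 0, so does the relative error. *)

definition particles :: "(nat \<Rightarrow> nat) \<Rightarrow> nat" where
  "particles n = (\<Sum>j\<in>support n. n j)"

lemma mem_configs_iff: "n \<in> configs N \<longleftrightarrow> finite (support n) \<and> particles n = N"
  by (simp add: configs_def particles_def)

lemma configs_0: "configs 0 = {\<lambda>_. 0}"
proof (intro equalityI subsetI)
  fix n assume "n \<in> configs 0"
  then have "support n = {}"
    by (auto simp: mem_configs_iff particles_def support_def)
  then show "n \<in> {\<lambda>_. 0}" by (auto simp: support_def)
qed (simp add: mem_configs_iff particles_def support_def)

lemma sum_support_eq_superset:
  assumes "finite S" "support n \<subseteq> S" "\<And>j. n j = 0 \<Longrightarrow> g j = 0"
  shows "(\<Sum>j\<in>support n. g j) = (\<Sum>j\<in>S. g j)"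
  using assms by (intro sum.mono_neutral_left) (auto simp: support_def)

lemma support_fun_upd_0: "support (n(0 := x)) \<subseteq> insert 0 (support n)"
  by (auto simp: support_def)

lemma particles_fun_upd_0:
  assumes "finite (support n)"
  shows "particles (n(0 := x)) + n 0 = particles n + x"
proof -
  let ?S = "insert 0 (support n)"
  have "particles (n(0 := x)) = x + (\<Sum>j\<in>support n - {0}. n j)"
    unfolding particles_def using assms support_fun_upd_0
    by (subst sum_support_eq_superset[where S = ?S]) (auto simp: sum.insert_remove)
  moreover have "particles n = n 0 + (\<Sum>j\<in>support n - {0}. n j)"
    unfolding particles_def using assms
    by (subst sum_support_eq_superset[where S = ?S]) (auto simp: sum.insert_remove)
  ultimately show ?thesis
    by simp
qed

lemma energy_fun_upd_0:
  assumes "finite (support n)"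
  shows "energy (n(0 := x)) = energy n"
proof -
  let ?S = "insert 0 (support n)"
  have "energy (n(0 := x)) = (\<Sum>j\<in>?S. j * (n(0 := x)) j)"
    unfolding energy_def using assms support_fun_upd_0
    by (intro sum_support_eq_superset) auto
  also have "\<dots> = (\<Sum>j\<in>?S. j * n j)"
    by (intro sum.cong) auto
  also have "\<dots> = energy n"
    unfolding energy_def using assms by (intro sum_support_eq_superset[symmetric]) auto
  finally show ?thesis .
qed

definition add_ground :: "nat \<Rightarrow> (nat \<Rightarrow> nat) \<Rightarrow> nat \<Rightarrow> nat" where
  "add_ground k n = n(0 := n 0 + k)"

lemma inj_add_ground: "inj (add_ground k)"
  by (rule inj_on_inverseI[where g = "\<lambda>n. n(0 := n 0 - k)"]) (simp add: add_ground_def)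

lemma image_add_ground_configs: "add_ground k ` configs M = {n \<in> configs (M + k). k \<le> n 0}"
  unfolding add_ground_def
proof (intro equalityI subsetI)
  fix n assume "n \<in> (\<lambda>n. n(0 := n 0 + k)) ` configs M"
  then obtain n' where n': "n' \<in> configs M" "n = n'(0 := n' 0 + k)" by blast
  then show "n \<in> {n \<in> configs (M + k). k \<le> n 0}"
    using particles_fun_upd_0[of n' "n' 0 + k"] support_fun_upd_0[of n']
    by (auto simp: mem_configs_iff intro: finite_subset)
next
  fix n assume n: "n \<in> {n \<in> configs (M + k). k \<le> n 0}"
  let ?n' = "n(0 := n 0 - k)"
  have "?n' \<in> configs M"
    using n particles_fun_upd_0[of n "n 0 - k"] support_fun_upd_0[of n]
    by (auto simp: mem_configs_iff intro: finite_subset)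
  moreover have "n = ?n'(0 := ?n' 0 + k)" using n by auto
  ultimately show "n \<in> (\<lambda>n. n(0 := n 0 + k)) ` configs M" by blast
qed

definition lift :: "(nat \<Rightarrow> nat) \<Rightarrow> nat \<Rightarrow> nat" where
  "lift n j = (case j of 0 \<Rightarrow> 0 | Suc i \<Rightarrow> n i)"

lemma lift_0 [simp]: "lift n 0 = 0" and lift_Suc [simp]: "lift n (Suc j) = n j"
  by (simp_all add: lift_def)

lemma inj_lift: "inj lift"
  by (rule inj_on_inverseI[where g = "\<lambda>n j. n (Suc j)"]) simp

lemma support_lift: "support (lift n) = Suc ` support n"
proof (intro set_eqI)
  fix j show "j \<in> support (lift n) \<longleftrightarrow> j \<in> Suc ` support n"
    by (cases j) (auto simp: support_def)
qed

lemma particles_lift: "particles (lift n) = particles n"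
  unfolding particles_def support_lift by (simp add: sum.reindex)

lemma energy_lift: "energy (lift n) = energy n + particles n"
  unfolding energy_def particles_def support_lift by (simp add: sum.reindex sum.distrib)

lemma image_lift_configs: "lift ` configs N = {n \<in> configs N. n 0 = 0}"
proof (intro equalityI subsetI)
  fix n assume n: "n \<in> {n \<in> configs N. n 0 = 0}"
  then have lifted: "n = lift (\<lambda>j. n (Suc j))"
    by (auto simp: fun_eq_iff lift_def split: nat.splits)
  then have "(\<lambda>j. n (Suc j)) \<in> configs N"
    using n particles_lift[of "\<lambda>j. n (Suc j)"] support_lift[of "\<lambda>j. n (Suc j)"]
    by (auto simp: mem_configs_iff finite_image_iff)
  with lifted show "n \<in> lift ` configs N" by blast
qed (auto simp: mem_configs_iff support_lift particles_lift)

lemma configs_Suc: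
  "configs (Suc M) = add_ground 1 ` configs M \<union> lift ` configs (Suc M)"
  "add_ground 1 ` configs M \<inter> lift ` configs (Suc M) = {}"
  unfolding image_add_ground_configs image_lift_configs by auto

lemma weight_add_ground: "finite (support n) \<Longrightarrow> weight a (add_ground k n) = weight a n"
  by (simp add: weight_def add_ground_def energy_fun_upd_0)

lemma weight_lift: "n \<in> configs N \<Longrightarrow> weight a (lift n) = exp (- a * real N) * weight a n"
  by (simp add: weight_def energy_lift mem_configs_iff algebra_simps flip: exp_add)

lemma sum_weight_image_add_ground:
  "G \<subseteq> configs M \<Longrightarrow> sum (weight a) (add_ground k ` G) = sum (weight a) G"
  by (auto simp: sum.reindex inj_on_subset[OF inj_add_ground] weight_add_ground mem_configs_iff
      intro!: sum.cong)

lemma infsum_weight_image_add_ground: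
  "G \<subseteq> configs M \<Longrightarrow> infsum (weight a) (add_ground k ` G) = infsum (weight a) G"
  by (auto simp: infsum_reindex inj_on_subset[OF inj_add_ground] weight_add_ground mem_configs_iff
      intro!: infsum_cong)

lemma sum_weight_image_lift:
  "G \<subseteq> configs N \<Longrightarrow> sum (weight a) (lift ` G) = exp (- a * real N) * sum (weight a) G"
  by (auto simp: sum.reindex inj_on_subset[OF inj_lift] weight_lift sum_distrib_left intro!: sum.cong)

lemma infsum_weight_image_lift:
  "G \<subseteq> configs N \<Longrightarrow> infsum (weight a) (lift ` G) = exp (- a * real N) * infsum (weight a) G"
  by (auto simp: infsum_reindex inj_on_subset[OF inj_lift] weight_lift
      simp flip: infsum_cmult_right' intro!: infsum_cong)

lemma prod_one_minus_exp_pos: "a > 0 \<Longrightarrow> 0 < (\<Prod>k=1..N. 1 - exp (- a * real k))"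
  by (intro prod_pos) auto

lemma finite_configs_Suc_decompose:
  assumes "finite F" "F \<subseteq> configs (Suc M)"
  obtains G1 G0 where "finite G1" "G1 \<subseteq> configs M" "finite G0" "G0 \<subseteq> configs (Suc M)"
    "sum (weight a) F = sum (weight a) G1 + exp (- a * real (Suc M)) * sum (weight a) G0"
    "G0 = {} \<or> (\<Sum>n\<in>G0. energy n) < (\<Sum>n\<in>F. energy n)"
proof -
  let ?add = "add_ground 1"
  have finite_part: "finite (F \<inter> X)" for X
    using assms(1) by simp
  obtain G1 where G1: "G1 \<subseteq> configs M" "finite G1" "F \<inter> ?add ` configs M = ?add ` G1"
    using finite_subset_image[OF finite_part[of "?add ` configs M"] Int_lower2] by blast
  obtain G0 where G0: "G0 \<subseteq> configs (Suc M)" "finite G0" "F \<inter> lift ` configs (Suc M) = lift ` G0"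
    using finite_subset_image[OF finite_part[of "lift ` configs (Suc M)"] Int_lower2] by blast
  have "F \<subseteq> ?add ` configs M \<union> lift ` configs (Suc M)"
    using assms(2) configs_Suc(1) by (rule subset_trans[OF _ equalityD1])
  then have F: "F = ?add ` G1 \<union> lift ` G0"
    using G0(3) G1(3) by blast
  have disjoint: "?add ` G1 \<inter> lift ` G0 = {}"
    using configs_Suc(2) G0(1) G1(1) by blast
  have "sum (weight a) F = sum (weight a) (?add ` G1) + sum (weight a) (lift ` G0)"
    unfolding F using G0(2) G1(2) disjoint by (intro sum.union_disjoint) auto
  moreover have "(\<Sum>n\<in>G0. energy n) < (\<Sum>n\<in>F. energy n)" if "G0 \<noteq> {}"
  proof -
    have "(\<Sum>n\<in>G0. energy n) < (\<Sum>n\<in>G0. energy (lift n))"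
      using that G0 by (intro sum_strict_mono) (auto simp: energy_lift mem_configs_iff)
    also have "\<dots> = (\<Sum>n\<in>lift ` G0. energy n)"
      by (simp add: sum.reindex inj_on_subset[OF inj_lift])
    also have "\<dots> \<le> (\<Sum>n\<in>F. energy n)"
      using assms(1) F by (intro sum_mono2) auto
    finally show ?thesis .
  qed
  ultimately show ?thesis
    using that[OF G1(2,1) G0(2,1)]
    unfolding sum_weight_image_add_ground[OF G1(1)] sum_weight_image_lift[OF G0(1)] by blast
qed

(* The recursion for the partition function needs summability first, so here it is run on
   finite partial sums, by an inner induction on their total energy. *)
lemma sum_weight_le:
  assumes "a > 0" "finite F" "F \<subseteq> configs N"
  shows "sum (weight a) F \<le> 1 / (\<Prod>k=1..N. 1 - exp (- a * real k))"
  using assms(2,3)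
proof (induction N arbitrary: F)
  case 0
  then have "F = {} \<or> F = {\<lambda>_. 0}"
    by (auto simp: configs_0)
  then show ?case
    by (auto simp: weight_def energy_def support_def)
next
  case (Suc M)
  define q where "q = exp (- a * real (Suc M))"
  define P where "P N = (\<Prod>k=1..N. 1 - exp (- a * real k))" for N
  have "0 < P M" "0 < P (Suc M)" "0 < 1 - q"
    using prod_one_minus_exp_pos[OF assms(1)] assms(1) by (auto simp: P_def q_def)
  moreover have P_Suc: "P (Suc M) = P M * (1 - q)"
    by (simp add: P_def q_def prod.cl_ivl_Suc)
  ultimately have bound_Suc: "1 / P M + q * (1 / P (Suc M)) = 1 / P (Suc M)"
    unfolding P_Suc by (simp add: field_simps)
  have "0 \<le> q"
    by (simp add: q_def)
  show ?case
    using Suc.prems unfolding P_def[symmetric]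
  proof (induction "\<Sum>n\<in>F. energy n" arbitrary: F rule: less_induct)
    case less
    obtain G1 G0 where G: "finite G1" "G1 \<subseteq> configs M" "finite G0" "G0 \<subseteq> configs (Suc M)"
      "sum (weight a) F = sum (weight a) G1 + q * sum (weight a) G0"
      "G0 = {} \<or> (\<Sum>n\<in>G0. energy n) < (\<Sum>n\<in>F. energy n)"
      using finite_configs_Suc_decompose[OF less.prems] unfolding q_def by blast
    have "sum (weight a) G1 \<le> 1 / P M"
      using Suc.IH G(1,2) by (simp add: P_def)
    moreover have "sum (weight a) G0 \<le> 1 / P (Suc M)"
      using G(6) less.hyps G(3,4) \<open>0 < P (Suc M)\<close> by auto
    ultimately have "sum (weight a) F \<le> 1 / P M + q * (1 / P (Suc M))"
      unfolding G(5) using \<open>0 \<le> q\<close> by (intro add_mono mult_left_mono)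
    then show ?case
      unfolding bound_Suc .
  qed
qed

lemma weight_summable_on_configs:
  assumes "a > 0"
  shows "weight a summable_on configs N"
proof (rule nonneg_bdd_above_summable_on)
  show "bdd_above (sum (weight a) ` {F. F \<subseteq> configs N \<and> finite F})"
    by (rule bdd_aboveI) (auto intro: sum_weight_le[OF assms])
qed (simp add: weight_def)

definition partition_function :: "real \<Rightarrow> nat \<Rightarrow> real" where
  "partition_function a N = infsum (weight a) (configs N)"

lemma partition_function_Suc:
  assumes "a > 0"
  shows "partition_function a (Suc M)
    = partition_function a M + exp (- a * real (Suc M)) * partition_function a (Suc M)"
proof -
  have summable: "weight a summable_on add_ground 1 ` configs M"
    "weight a summable_on lift ` configs (Suc M)"
    using summable_on_subset[OF weight_summable_on_configs[OF assms]] configs_Suc(1) by blast+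
  have "partition_function a (Suc M)
      = infsum (weight a) (add_ground 1 ` configs M \<union> lift ` configs (Suc M))"
    unfolding partition_function_def using configs_Suc(1) by (rule arg_cong)
  then show ?thesis
    unfolding infsum_Un_disjoint[OF summable configs_Suc(2)] partition_function_def
      infsum_weight_image_add_ground[OF order_refl] infsum_weight_image_lift[OF order_refl] .
qed

lemma partition_function_eq:
  assumes "a > 0"
  shows "partition_function a N = 1 / (\<Prod>k=1..N. 1 - exp (- a * real k))"
proof (induction N)
  case 0
  then show ?case by (simp add: partition_function_def configs_0 weight_def energy_def support_def)
next
  case (Suc M)
  define q where "q = exp (- a * real (Suc M))"
  define P where "P = (\<Prod>k=1..M. 1 - exp (- a * real k))"
  have prod_Suc: "(\<Prod>k=1..Suc M. 1 - exp (- a * real k)) = P * (1 - q)"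
    by (simp add: prod.cl_ivl_Suc q_def P_def)
  have "0 < 1 - q" "0 < P"
    using assms prod_one_minus_exp_pos[OF assms] by (auto simp: q_def P_def)
  moreover have "partition_function a (Suc M) * (1 - q) = 1 / P"
    using partition_function_Suc[OF assms, of M] Suc.IH by (simp add: q_def P_def algebra_simps)
  ultimately show ?case
    unfolding prod_Suc by (simp add: field_simps)
qed

lemma canon_prob_ground_occupation_ge:
  assumes "a > 0" "m \<le> N"
  shows "canon_prob N a (\<lambda>n. N - m \<le> n 0) = (\<Prod>k=Suc m..N. 1 - exp (- a * real k))"
proof -
  have "{n \<in> configs N. N - m \<le> n 0} = add_ground (N - m) ` configs m"
    using image_add_ground_configs[of "N - m" m] assms(2) by simp
  then have "canon_prob N a (\<lambda>n. N - m \<le> n 0) = partition_function a m / partition_function a N"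
    by (simp add: canon_prob_def partition_function_def
        infsum_weight_image_add_ground[OF order_refl])
  moreover have "(\<Prod>k=1..N. 1 - exp (- a * real k))
      = (\<Prod>k=1..m. 1 - exp (- a * real k)) * (\<Prod>k=Suc m..N. 1 - exp (- a * real k))"
  proof -
    have "{1..N} = {1..m} \<union> {Suc m..N}"
      using assms(2) by auto
    then show ?thesis
      by (simp add: prod.union_disjoint)
  qed
  ultimately show ?thesis
    using assms(1) prod_one_minus_exp_pos[OF assms(1), of m]
    by (simp add: partition_function_eq[OF assms(1)])
qed

lemma exp_sum_telescope:
  assumes "m \<le> N"
  shows "(exp a - 1) * (\<Sum>k=Suc m..N. exp (- a * real k)) = exp (- a * real m) - exp (- a * real N)"
  using assms
proof (induction N rule: dec_induct)
  case base
  then show ?case by simp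
next
  case (step N)
  have "exp a * exp (- a * real (Suc N)) = exp (- a * real N)"
    by (simp add: algebra_simps flip: exp_add)
  then show ?case
    using step by (simp add: sum.cl_ivl_Suc algebra_simps)
qed

lemma A_N1_eq_sum:
  assumes "a > 0" "m \<le> N" "0 < N"
  shows "A_N1 N a (1 - real m / real N) = (\<Sum>k=Suc m..N. exp (- a * real k))"
proof -
  have "exp (- real N * a) * (exp ((1 - real m / real N) * real N * a) - 1)
      = exp (- a * real m) - exp (- a * real N)"
    using assms(3) by (simp add: field_simps flip: exp_add)
  moreover have "0 < exp a - 1"
    using assms(1) by simp
  ultimately show ?thesis
    unfolding A_N1_def using exp_sum_telescope[OF assms(2), of a]
    by (simp add: field_simps)
qed

lemma minus_ln_one_minus_bounds:
  fixes x :: real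
  assumes "0 < x" "x < 1"
  shows "x < - ln (1 - x)" "- ln (1 - x) < x * (1 - ln (1 - x))"
proof -
  show "x < - ln (1 - x)"
    using ln_diff_less[of "1 - x" 1] assms by simp
  have "- ln (1 - x) < x / (1 - x)"
    using ln_diff_less[of 1 "1 - x"] assms by simp
  then show "- ln (1 - x) < x * (1 - ln (1 - x))"
    using assms by (simp add: field_simps)
qed

lemma prod_one_minus_eq_exp_sum:
  fixes x :: "'i \<Rightarrow> real"
  assumes "finite K" "0 < c" "c < 1" and x: "\<And>k. k \<in> K \<Longrightarrow> 0 < x k \<and> x k \<le> c"
  shows "\<exists>\<epsilon>. (\<Prod>k\<in>K. 1 - x k) = exp (- (1 + \<epsilon>) * (\<Sum>k\<in>K. x k))
    \<and> 0 < \<epsilon> \<and> \<epsilon> < - ln (1 - c)"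
proof (cases "K = {}")
  case True
  have "0 < - ln (1 - c)"
    using assms(2,3) by simp
  then show ?thesis
    using True by (intro exI[of _ "- ln (1 - c) / 2"]) simp
next
  case False
  define L where "L = - ln (1 - c)"
  define A where "A = (\<Sum>k\<in>K. x k)"
  define S where "S = (\<Sum>k\<in>K. - ln (1 - x k))"
  have x_lt_1: "x k < 1" if "k \<in> K" for k
    using x[OF that] assms(3) by linarith
  have "0 < A"
    unfolding A_def using False assms(1) x by (intro sum_pos) auto
  have "(\<Prod>k\<in>K. 1 - x k) = exp (- S)"
    unfolding S_def sum_negf[symmetric] exp_sum[OF assms(1)] using x_lt_1
    by (intro prod.cong refl) simp
  moreover have "A < S"
    unfolding A_def S_def using assms(1) False x x_lt_1 minus_ln_one_minus_bounds(1)
    by (intro sum_strict_mono) auto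
  moreover have "S < A * (1 + L)"
  proof -
    have "- ln (1 - x k) < x k * (1 + L)" if "k \<in> K" for k
    proof -
      have "- ln (1 - x k) \<le> L"
        unfolding L_def using x[OF that] assms(3) by simp
      then have "x k * (1 - ln (1 - x k)) \<le> x k * (1 + L)"
        using x[OF that] by (intro mult_left_mono) auto
      then show ?thesis
        using minus_ln_one_minus_bounds(2)[of "x k"] x[OF that] x_lt_1[OF that] by linarith
    qed
    then show ?thesis
      unfolding A_def S_def sum_distrib_right using assms(1) False by (intro sum_strict_mono) auto
  qed
  ultimately show ?thesis
    using \<open>0 < A\<close> unfolding A_def[symmetric] L_def[symmetric]
    by (intro exI[of _ "S / A - 1"]) (simp add: field_simps)
qed

lemma canon_prob_condensate_fraction_ge:
  assumes "a > 0" "0 < m" "m \<le> N"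
  shows "\<exists>\<epsilon>. canon_prob N a (\<lambda>n. real (n 0) / real N \<ge> 1 - real m / real N)
      = exp (- (1 + \<epsilon>) * A_N1 N a (1 - real m / real N))
    \<and> 0 < \<epsilon> \<and> \<epsilon> < - ln (1 - exp (- a * real m))"
proof -
  have "0 < N"
    using assms(2,3) by linarith
  moreover have "1 - real m / real N = real (N - m) / real N"
    using \<open>0 < N\<close> assms(3) by (simp add: field_simps of_nat_diff)
  ultimately have event:
    "(\<lambda>n. real (n 0) / real N \<ge> 1 - real m / real N) = (\<lambda>n. N - m \<le> n 0)"
    by (simp add: divide_le_cancel)
  have "exp (- a * real k) \<le> exp (- a * real m)" if "k \<in> {Suc m..N}" for k
    using assms(1) that by simp
  then show ?thesis
    unfolding event canon_prob_ground_occupation_ge[OF assms(1,3)]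
      A_N1_eq_sum[OF assms(1,3) \<open>0 < N\<close>]
    using assms(1,2) by (intro prod_one_minus_eq_exp_sum) auto
qed

lemma tendsto_minus_ln_one_minus_exp_neg:
  fixes x :: "'a \<Rightarrow> real"
  assumes "filterlim x at_top F"
  shows "((\<lambda>N. - ln (1 - exp (- x N))) \<longlongrightarrow> 0) F"
proof -
  have "((\<lambda>t :: real. - ln (1 - exp (- t))) \<longlongrightarrow> 0) at_top"
    by real_asymp
  then show ?thesis
    using assms by (rule filterlim_compose)
qed

lemma eventually_choice_squeezed:
  fixes L :: "'a \<Rightarrow> real"
  assumes "\<forall>\<^sub>F N in F. \<exists>e. Q N e \<and> 0 < e \<and> e < L N" "(L \<longlongrightarrow> 0) F"
  shows "\<exists>\<epsilon>. (\<forall>\<^sub>F N in F. Q N (\<epsilon> N) \<and> 0 < \<epsilon> N \<and> \<epsilon> N < L N) \<and> (\<epsilon> \<longlongrightarrow> 0) F"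
proof -
  define \<epsilon> where "\<epsilon> N = (SOME e. Q N e \<and> 0 < e \<and> e < L N)" for N
  have chosen: "\<forall>\<^sub>F N in F. Q N (\<epsilon> N) \<and> 0 < \<epsilon> N \<and> \<epsilon> N < L N"
    using assms(1) unfolding \<epsilon>_def by (rule eventually_mono) (rule someI_ex)
  have "(\<epsilon> \<longlongrightarrow> 0) F"
    using chosen
    by (intro tendsto_sandwich[OF _ _ tendsto_const assms(2)]) (auto elim: eventually_mono)
  with chosen show ?thesis
    by blast
qed

theorem proposition4:
  fixes a :: "nat \<Rightarrow> real" and m :: "nat \<Rightarrow> nat" and lam :: real
  assumes apos: "\<And>N. a N > 0"
    and mle: "\<And>N. m N \<le> N"
    and lim: "(\<lambda>N. 1 - real (m N) / real N) \<longlonglongrightarrow> lam"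
    and lamle: "lam \<le> 1"
    and div: "filterlim (\<lambda>N. (1 - (1 - real (m N) / real N)) * real N * a N) at_top sequentially"
  shows "\<exists>\<epsilon> :: nat \<Rightarrow> real.
     (\<forall>\<^sub>F N in sequentially.
        canon_prob N (a N) (\<lambda>n. real (n 0) / real N \<ge> 1 - real (m N) / real N)
          = exp (- (1 + \<epsilon> N) * A_N1 N (a N) (1 - real (m N) / real N))
        \<and> 0 < \<epsilon> N
        \<and> \<epsilon> N < - ln (1 - exp (- (1 - (1 - real (m N) / real N)) * real N * a N)))
     \<and> \<epsilon> \<longlonglongrightarrow> 0
     \<and> (\<lambda>N. - ln (1 - exp (- (1 - (1 - real (m N) / real N)) * real N * a N))) \<longlonglongrightarrow> 0"
proof -
  define x where "x N = (1 - (1 - real (m N) / real N)) * real N * a N" for N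
  define L where "L N = - ln (1 - exp (- (1 - (1 - real (m N) / real N)) * real N * a N))" for N
  have x_top: "filterlim x at_top sequentially"
    using div unfolding x_def .
  have "L = (\<lambda>N. - ln (1 - exp (- x N)))"
    by (intro ext) (simp add: L_def x_def)
  then have L_lim: "L \<longlonglongrightarrow> 0"
    using tendsto_minus_ln_one_minus_exp_neg[OF x_top] by simp
  have "\<forall>\<^sub>F N in sequentially. 0 < x N"
    using x_top filterlim_at_top_dense by blast
  then have "\<forall>\<^sub>F N in sequentially. \<exists>e.
      canon_prob N (a N) (\<lambda>n. real (n 0) / real N \<ge> 1 - real (m N) / real N)
        = exp (- (1 + e) * A_N1 N (a N) (1 - real (m N) / real N)) \<and> 0 < e \<and> e < L N"
    (is "eventually (\<lambda>N. \<exists>e. ?P N e) _")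
  proof (rule eventually_mono)
    fix N assume "0 < x N"
    then have "0 < N" "0 < m N"
      by (auto simp: x_def zero_less_mult_iff split: if_splits)
    moreover have "L N = - ln (1 - exp (- a N * real (m N)))"
      using \<open>0 < N\<close> by (simp add: L_def field_simps)
    ultimately show "\<exists>e. ?P N e"
      using canon_prob_condensate_fraction_ge[OF apos _ mle] by presburger
  qed
  from eventually_choice_squeezed[OF this L_lim] show ?thesis
    using L_lim unfolding L_def by blast
qed

end
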